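(* Let $L:\mathbb{R}^k\times\mathcal{Y}\to\mathbb{R}_+$ be a polyhedral loss, and let $\mathcal{C}$ be a collection of polyhedral subsets of $\mathbb{R}^k$ such that for every $y\in\mathcal{Y}$, $L(\cdot,y)$ is affine on each $C\in\mathcal{C}$. Let $R=\bigcup\mathcal{C}$. Then for every $p\in\Delta_\mathcal{Y}$, $\arg\min_{u\in\mathbb{R}^k}L(u;p)\cap R=\bigcup\mathcal{F}$ for some family $\mathcal{F}$ of faces of members of $\mathcal{C}$.
   Context: $\mathcal{Y}$ is a finite label set (in the paper $\{-1,1\}^k$) and $\Delta_\mathcal{Y}$ the probability distributions on it; $L(u;p)=\sum_yp_yL(u,y)$. A loss is polyhedral if each $L(\cdot,y)$ is convex and piecewise linear (a maximum of finitely many affine functions). *)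

theory Defs
  imports "HOL-Analysis.Analysis"
begin

definition polyhedral_loss :: "(real^('k::finite) \<Rightarrow> 'y \<Rightarrow> real) \<Rightarrow> bool" where
  "polyhedral_loss L \<longleftrightarrow>
     (\<forall>y. convex_on UNIV (\<lambda>u. L u y) \<and>
          (\<exists>A :: ((real^'k) \<times> real) set. finite A \<and> A \<noteq> {} \<and>
             (\<forall>u. L u y = Max ((\<lambda>(a,b). a \<bullet> u + b) ` A))))"

definition prob_simplex :: "('y::finite \<Rightarrow> real) set" where
  "prob_simplex = {p. (\<forall>y. 0 \<le> p y) \<and> (\<Sum>y\<in>UNIV. p y) = 1}"

definition exp_loss :: "(real^('k::finite) \<Rightarrow> 'y::finite \<Rightarrow> real) \<Rightarrow> ('y \<Rightarrow> real) \<Rightarrow> real^'k \<Rightarrow> real" where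
  "exp_loss L p u = (\<Sum>y\<in>UNIV. p y * L u y)"

definition affine_on_set :: "(real^'k \<Rightarrow> real) \<Rightarrow> (real^'k) set \<Rightarrow> bool" where
  "affine_on_set f C \<longleftrightarrow> (\<exists>a b. \<forall>u\<in>C. f u = a \<bullet> u + b)"

end

theory Submission
  imports Defs
begin

text \<open>On each cell C the expected loss is affine, and the minimisers of an affine function
  that lie in a convex set are cut out by a supporting hyperplane, i.e. they form a face of C.\<close>

lemma affine_on_set_exp_loss:
  fixes L :: "real^('k::finite) \<Rightarrow> ('y::finite) \<Rightarrow> real"
  assumes "\<And>y. affine_on_set (\<lambda>u. L u y) C"
  shows "affine_on_set (exp_loss L p) C"
proof -
  obtain a b where ab: "\<And>y u. u \<in> C \<Longrightarrow> L u y = a y \<bullet> u + b y"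
    using assms unfolding affine_on_set_def by metis
  have "exp_loss L p u = (\<Sum>y\<in>UNIV. p y *\<^sub>R a y) \<bullet> u + (\<Sum>y\<in>UNIV. p y * b y)"
    if "u \<in> C" for u
    unfolding exp_loss_def
    by (simp add: ab[OF that] inner_sum_left distrib_left sum.distrib)
  then show ?thesis
    unfolding affine_on_set_def by blast
qed

lemma face_of_affine_level_set:
  fixes f :: "'a::real_inner \<Rightarrow> real"
  assumes "convex C"
    and affine: "\<And>x. x \<in> C \<Longrightarrow> f x = a \<bullet> x + b"
    and "\<And>x. x \<in> C \<Longrightarrow> m \<le> f x"
  shows "{x\<in>C. f x = m} face_of C"
proof -
  have "{x\<in>C. f x = m} = C \<inter> {x. a \<bullet> x = m - b}"
    using affine by auto
  moreover have "C \<inter> {x. a \<bullet> x = m - b} face_of C"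
    using assms by (intro face_of_Int_supporting_hyperplane_ge) force+
  ultimately show ?thesis
    by simp
qed

lemma face_of_Int_argmin_affine:
  fixes f :: "'a::real_inner \<Rightarrow> real"
  assumes "convex C"
    and affine: "\<And>x. x \<in> C \<Longrightarrow> f x = a \<bullet> x + b"
  shows "{u. \<forall>v. f u \<le> f v} \<inter> C face_of C"
proof (cases "{u. \<forall>v. f u \<le> f v} = {}")
  case True
  show ?thesis
    unfolding True by simp
next
  case False
  then obtain u0 where u0: "\<forall>v. f u0 \<le> f v"
    by blast
  then have "{u. \<forall>v. f u \<le> f v} \<inter> C = {x\<in>C. f x = f u0}"
    by (auto intro: order_antisym order_trans)
  moreover have "{x\<in>C. f x = f u0} face_of C"
    using u0 by (intro face_of_affine_level_set[OF \<open>convex C\<close> affine]) auto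
  ultimately show ?thesis
    by simp
qed

theorem lemma4:
  fixes L :: "real^('k::finite) \<Rightarrow> ('y::finite) \<Rightarrow> real"
    and \<C> :: "(real^'k) set set"
  assumes "polyhedral_loss L"
    and "\<And>u y. 0 \<le> L u y"
    and "\<And>C. C \<in> \<C> \<Longrightarrow> polyhedron C"
    and "\<And>C y. C \<in> \<C> \<Longrightarrow> affine_on_set (\<lambda>u. L u y) C"
  shows "\<forall>p \<in> prob_simplex.
           \<exists>\<F>. (\<forall>F\<in>\<F>. \<exists>C\<in>\<C>. F face_of C) \<and>
                {u. \<forall>v. exp_loss L p u \<le> exp_loss L p v} \<inter> \<Union>\<C> = \<Union>\<F>"
proof
  fix p :: "'y \<Rightarrow> real"
  define M where "M = {u. \<forall>v. exp_loss L p u \<le> exp_loss L p v}"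
  have faces: "M \<inter> C face_of C" if "C \<in> \<C>" for C
  proof -
    have "affine_on_set (exp_loss L p) C"
      by (rule affine_on_set_exp_loss) (rule assms(4)[OF \<open>C \<in> \<C>\<close>])
    then obtain a b where "\<And>u. u \<in> C \<Longrightarrow> exp_loss L p u = a \<bullet> u + b"
      unfolding affine_on_set_def by blast
    moreover have "convex C"
      by (rule polyhedron_imp_convex) (rule assms(3)[OF \<open>C \<in> \<C>\<close>])
    ultimately show ?thesis
      unfolding M_def by (rule face_of_Int_argmin_affine[rotated])
  qed
  show "\<exists>\<F>. (\<forall>F\<in>\<F>. \<exists>C\<in>\<C>. F face_of C) \<and>
                {u. \<forall>v. exp_loss L p u \<le> exp_loss L p v} \<inter> \<Union>\<C> = \<Union>\<F>"
  proof (intro exI[of _ "(\<lambda>C. M \<inter> C) ` \<C>"] conjI)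
    show "\<forall>F\<in>(\<lambda>C. M \<inter> C) ` \<C>. \<exists>C\<in>\<C>. F face_of C"
      using faces by blast
    show "{u. \<forall>v. exp_loss L p u \<le> exp_loss L p v} \<inter> \<Union>\<C> = \<Union>((\<lambda>C. M \<inter> C) ` \<C>)"
      unfolding M_def by blast
  qed
qed

end
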